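(* Let $\hat\rho$ be a two-mode Gaussian state with zero first moments and covariance matrix in the standard form $\gamma=\begin{pmatrix}\lambda_a I_2 & C\\ C^T&\lambda_b I_2\end{pmatrix}$, $C=\mathrm{diag}(c_x,-c_p)$, with $c_x\ge|c_p|$ and $\lambda_a\lambda_b>c_x^2$. Then $$Q(\hat\rho)=\frac{2}{\pi}\arctan\!\Big(\frac{c_x}{\sqrt{\lambda_a\lambda_b-c_x^2}}\Big),$$ the supremum being attained at $\theta=\varphi=0$. In particular, for a two-mode squeezed vacuum ($\lambda_a=\lambda_b=\cosh 2r$, $c_x=c_p=\sinh 2r$, $r\ge 0$), $Q=\frac{2}{\pi}\arctan(\sinh 2r)$.
   Context: Covariance matrix convention: $\gamma_{ij}=\mathrm{tr}[\hat\rho\{\hat R_i-d_i,\hat R_j-d_j\}]$ with $\hat R=(\hat x_A,\hat p_A,\hat x_B,\hat p_B)$, $[\hat x_j,\hat p_j]=i$, so the vacuum has $\gamma=I$. For angles $\theta,\varphi$ let $\hat x_A^\theta=\cos\theta\,\hat x_A+\sin\theta\,\hat p_A$, $\hat x_B^\varphi=\cos\varphi\,\hat x_B+\sin\varphi\,\hat p_B$, and $f^{\hat\rho}_{\theta,\varphi}(u,v)$ the joint density of their outcomes. For $u,v\ge0$, $S(u,v)=f(u,v)+f(-u,-v)+f(u,-v)+f(-u,v)$, $D(u,v)=f(u,v)+f(-u,-v)-f(u,-v)-f(-u,v)$, $\mathcal B_{\theta,\varphi}=|D|/S$ (0 where $S=0$), and $Q(\hat\rho)=\sup_{\theta,\varphi}\int\!\!\int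 f^{\hat\rho}_{\theta,\varphi}(u,v)\mathcal B_{\theta,\varphi}(|u|,|v|)\,du\,dv$. *)

theory Defs
  imports "HOL-Analysis.Analysis"
begin

text \<open>Two-mode covariance matrices are represented as functions nat => nat => real
  on the index set {0..<4}, ordered as (x_A, p_A, x_B, p_B).
  Convention: gamma_ij = tr[rho {R_i - d_i, R_j - d_j}], so the vacuum has gamma = I
  and the classical covariance of the quadratures is gamma / 2.\<close>

definition gamma_std :: "real \<Rightarrow> real \<Rightarrow> real \<Rightarrow> real \<Rightarrow> nat \<Rightarrow> nat \<Rightarrow> real" where
  "gamma_std la lb cx cp i j =
     [[la, 0, cx, 0], [0, la, 0, - cp], [cx, 0, lb, 0], [0, - cp, 0, lb]] ! i ! j"

definition Omega2 :: "nat \<Rightarrow> nat \<Rightarrow> real" where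
  "Omega2 i j = [[0, 1, 0, 0], [-1, 0, 0, 0], [0, 0, 0, 1], [0, 0, -1, 0]] ! i ! j"

definition bona_fide :: "(nat \<Rightarrow> nat \<Rightarrow> real) \<Rightarrow> bool" where
  "bona_fide g \<longleftrightarrow> (\<forall>i<4. \<forall>j<4. g i j = g j i) \<and>
     (\<forall>z :: nat \<Rightarrow> complex. 0 \<le> Re (\<Sum>i<4. \<Sum>j<4.
         cnj (z i) * (complex_of_real (g i j) + \<i> * complex_of_real (Omega2 i j)) * z j))"

definition qform :: "(nat \<Rightarrow> nat \<Rightarrow> real) \<Rightarrow> (nat \<Rightarrow> real) \<Rightarrow> (nat \<Rightarrow> real) \<Rightarrow> real" where
  "qform g w w' = (\<Sum>i<4. \<Sum>j<4. w i * g i j * w' j)"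

text \<open>Coefficient vectors of x_A^theta = cos theta x_A + sin theta p_A and
  x_B^phi = cos phi x_B + sin phi p_B.\<close>
definition wA :: "real \<Rightarrow> nat \<Rightarrow> real" where
  "wA \<theta> = (\<lambda>i. [cos \<theta>, sin \<theta>, 0, 0] ! i)"
definition wB :: "real \<Rightarrow> nat \<Rightarrow> real" where
  "wB \<phi> = (\<lambda>i. [0, 0, cos \<phi>, sin \<phi>] ! i)"

definition gauss2 :: "real \<Rightarrow> real \<Rightarrow> real \<Rightarrow> real \<Rightarrow> real \<Rightarrow> real" where
  "gauss2 a b c u v =
     exp (- (b * u\<^sup>2 - 2 * c * u * v + a * v\<^sup>2) / (2 * (a * b - c\<^sup>2)))
       / (2 * pi * sqrt (a * b - c\<^sup>2))"

text \<open>Joint density f_{theta,phi}(u,v) of the outcomes of homodyne measurements of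
  x_A^theta and x_B^phi on the zero-mean Gaussian state with covariance matrix g:
  a centered bivariate normal with covariance (1/2) w^T g w'.\<close>
definition quad_density :: "(nat \<Rightarrow> nat \<Rightarrow> real) \<Rightarrow> real \<Rightarrow> real \<Rightarrow> real \<Rightarrow> real \<Rightarrow> real" where
  "quad_density g \<theta> \<phi> u v =
     gauss2 (qform g (wA \<theta>) (wA \<theta>) / 2) (qform g (wB \<phi>) (wB \<phi>) / 2)
            (qform g (wA \<theta>) (wB \<phi>) / 2) u v"

definition S_fun :: "(real \<Rightarrow> real \<Rightarrow> real) \<Rightarrow> real \<Rightarrow> real \<Rightarrow> real" where
  "S_fun f u v = f u v + f (-u) (-v) + f u (-v) + f (-u) v"

definition D_fun :: "(real \<Rightarrow> real \<Rightarrow> real) \<Rightarrow> real \<Rightarrow> real \<Rightarrow> real" where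
  "D_fun f u v = f u v + f (-u) (-v) - f u (-v) - f (-u) v"

definition Bell_fun :: "(real \<Rightarrow> real \<Rightarrow> real) \<Rightarrow> real \<Rightarrow> real \<Rightarrow> real" where
  "Bell_fun f u v = (if S_fun f u v = 0 then 0 else \<bar>D_fun f u v\<bar> / S_fun f u v)"

definition Q_integrand :: "(nat \<Rightarrow> nat \<Rightarrow> real) \<Rightarrow> real \<Rightarrow> real \<Rightarrow> real" where
  "Q_integrand g \<theta> \<phi> =
     (LINT z | (lborel :: (real \<times> real) measure).
        quad_density g \<theta> \<phi> (fst z) (snd z) *
        Bell_fun (quad_density g \<theta> \<phi>) \<bar>fst z\<bar> \<bar>snd z\<bar>)"

definition Q_value :: "(nat \<Rightarrow> nat \<Rightarrow> real) \<Rightarrow> real" where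
  "Q_value g = (SUP p \<in> (UNIV :: (real \<times> real) set). Q_integrand g (fst p) (snd p))"

end

theory Submission
  imports Defs "HOL-Real_Asymp.Real_Asymp"
begin

(*
  For a zero-mean Gaussian state in standard form, the homodyne outcomes of the
  quadratures x_A^theta, x_B^phi form a centred bivariate normal density gauss2 a b c
  with a = la/2, b = lb/2 and c = (cx cos theta cos phi - cp sin theta sin phi)/2.
  The heart of the proof is the closed form

      integral of  f(u,v) * Bell(|u|,|v|)  over R^2  =  2/pi * arctan(|c| / sqrt(ab - c^2)),

  obtained in four steps: (1) fold R^2 onto the open quadrant u, v > 0, where the sum of
  the integrand over the four sign choices is |D| = a difference of two exponentials;
  (2) substitute v = u t on each ray; (3) integrate the resulting Gaussian difference in u;
  (4) integrate the resulting rational function in t via an arctan antiderivative.  Since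
  the closed form is increasing in |c| and |c| <= cx/2 with equality at theta = phi = 0,
  the supremum Q is attained there; the squeezed-vacuum case is the instance
  la = lb = cosh 2r, cx = cp = sinh 2r, for which la lb - cx^2 = 1.
*)

text \<open>Folding the real line at 0: the origin is a null set, so integrating G equals
  integrating G(x) + G(-x) over the positive half-line.\<close>
lemma nn_integral_split_sign:
  fixes G :: "real \<Rightarrow> ennreal"
  assumes [measurable]: "G \<in> borel_measurable borel"
  shows "(\<integral>\<^sup>+x. G x \<partial>lborel) = (\<integral>\<^sup>+x. (G x + G (-x)) * indicator {0<..} x \<partial>lborel)"
proof -
  have "(\<integral>\<^sup>+x. G x \<partial>lborel) = (\<integral>\<^sup>+x. G x * indicator {0<..} x + G x * indicator {..0} x \<partial>lborel)"
    by (intro nn_integral_cong) (auto split: split_indicator)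
  also have "\<dots> = (\<integral>\<^sup>+x. G x * indicator {0<..} x \<partial>lborel) + (\<integral>\<^sup>+x. G x * indicator {..0} x \<partial>lborel)"
    by (rule nn_integral_add) auto
  also have "(\<integral>\<^sup>+x. G x * indicator {..0} x \<partial>lborel) = (\<integral>\<^sup>+x. G (-x) * indicator {..0} (-x) \<partial>lborel)"
    using nn_integral_real_affine[of "\<lambda>x. G x * indicator {..0} x" "-1" 0] by simp
  also have "\<dots> = (\<integral>\<^sup>+x. G (-x) * indicator {0<..} x \<partial>lborel)"
    by (intro nn_integral_cong_AE eventually_mono[OF AE_lborel_singleton[of 0]]) (auto split: split_indicator)
  also have "(\<integral>\<^sup>+x. G x * indicator {0<..} x \<partial>lborel) + \<dots> = (\<integral>\<^sup>+x. G x * indicator {0<..} x + G (-x) * indicator {0<..} x \<partial>lborel)"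
    by (rule nn_integral_add[symmetric]) auto
  finally show ?thesis by (simp add: distrib_right)
qed

text \<open>Folding the plane onto the open first quadrant by applying the one-dimensional
  fold in each coordinate (Tonelli turns the planar integral into an iterated one).\<close>
lemma nn_integral_fold_quadrants:
  fixes h :: "real \<Rightarrow> real \<Rightarrow> real"
  assumes [measurable]: "(\<lambda>z. h (fst z) (snd z)) \<in> borel_measurable borel"
    and nonneg: "\<And>u v. 0 \<le> h u v"
  shows "(\<integral>\<^sup>+z. ennreal (h (fst z) (snd z)) \<partial>(lborel :: (real \<times> real) measure)) =
     (\<integral>\<^sup>+u. \<integral>\<^sup>+v. ennreal ((h u v + h u (-v) + h (-u) v + h (-u) (-v))
        * indicator {0<..} v * indicator {0<..} u) \<partial>lborel \<partial>lborel)"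
proof -
  have [measurable]: "(\<lambda>(u, v). h u v) \<in> borel_measurable (borel \<Otimes>\<^sub>M borel)"
    using assms(1) by (simp add: borel_prod case_prod_beta')
  define H where "H u = (\<integral>\<^sup>+v. (ennreal (h u v) + ennreal (h u (-v))) * indicator {0<..} v \<partial>lborel)" for u
  have [measurable]: "H \<in> borel_measurable borel"
    unfolding H_def by measurable
  have "(\<integral>\<^sup>+z. ennreal (h (fst z) (snd z)) \<partial>(lborel :: (real \<times> real) measure)) =
       (\<integral>\<^sup>+u. \<integral>\<^sup>+v. ennreal (h u v) \<partial>lborel \<partial>lborel)"
    by (subst lborel_prod[symmetric], subst lborel.nn_integral_fst[symmetric]) auto
  also have "\<dots> = (\<integral>\<^sup>+u. H u \<partial>lborel)"
    unfolding H_def by (intro nn_integral_cong nn_integral_split_sign) measurable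
  also have "\<dots> = (\<integral>\<^sup>+u. (H u + H (-u)) * indicator {0<..} u \<partial>lborel)"
    by (rule nn_integral_split_sign) measurable
  also have "\<dots> = (\<integral>\<^sup>+u. \<integral>\<^sup>+v. ennreal ((h u v + h u (-v) + h (-u) v + h (-u) (-v))
        * indicator {0<..} v * indicator {0<..} u) \<partial>lborel \<partial>lborel)"
  proof (intro nn_integral_cong)
    fix u :: real
    have "H u + H (-u) = (\<integral>\<^sup>+v. (ennreal (h u v) + ennreal (h u (-v))) * indicator {0<..} v
                + (ennreal (h (-u) v) + ennreal (h (-u) (-v))) * indicator {0<..} v \<partial>lborel)"
      unfolding H_def by (rule nn_integral_add[symmetric]) measurable
    also have "\<dots> = (\<integral>\<^sup>+v. ennreal ((h u v + h u (-v) + h (-u) v + h (-u) (-v))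
        * indicator {0<..} v) \<partial>lborel)"
      using nonneg by (intro nn_integral_cong)
        (auto simp: ennreal_plus[symmetric] add.assoc simp del: ennreal_plus split: split_indicator)
    finally show "(H u + H (-u)) * indicator {0<..} u = (\<integral>\<^sup>+v. ennreal ((h u v + h u (-v) + h (-u) v + h (-u) (-v))
        * indicator {0<..} v * indicator {0<..} u) \<partial>lborel)"
      by (auto split: split_indicator)
  qed
  finally show ?thesis .
qed

lemma nn_integral_ray_substitution:
  fixes R :: "real \<Rightarrow> real \<Rightarrow> real"
  assumes [measurable]: "(\<lambda>z. R (fst z) (snd z)) \<in> borel_measurable borel"
  shows "(\<integral>\<^sup>+u. \<integral>\<^sup>+v. ennreal (R u v * indicator {0<..} v * indicator {0<..} u) \<partial>lborel \<partial>lborel) =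
     (\<integral>\<^sup>+t. \<integral>\<^sup>+u. ennreal (u * R u (u * t) * indicator {0<..} u * indicator {0<..} t) \<partial>lborel \<partial>lborel)"
proof -
  have [measurable]: "(\<lambda>(u, v). R u v) \<in> borel_measurable (borel \<Otimes>\<^sub>M borel)"
    using assms(1) by (simp add: borel_prod case_prod_beta')
  have "(\<integral>\<^sup>+v. ennreal (R u v * indicator {0<..} v * indicator {0<..} u) \<partial>lborel) =
        (\<integral>\<^sup>+t. ennreal (u * R u (u * t) * indicator {0<..} u * indicator {0<..} t) \<partial>lborel)" for u
  proof (cases "u > 0")
    case u: True
    have "(\<integral>\<^sup>+v. ennreal (R u v * indicator {0<..} v * indicator {0<..} u) \<partial>lborel)
       = ennreal u * (\<integral>\<^sup>+t. ennreal (R u (0 + u * t) * indicator {0<..} (0 + u * t)) \<partial>lborel)"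
      using u by (subst nn_integral_real_affine[where c=u and t=0]) auto
    also have "\<dots> = (\<integral>\<^sup>+t. ennreal (u * R u (u * t) * indicator {0<..} u * indicator {0<..} t) \<partial>lborel)"
      using u by (subst nn_integral_cmult[symmetric])
         (auto simp: ennreal_mult'[symmetric] zero_less_mult_iff intro!: nn_integral_cong split: split_indicator)
    finally show ?thesis .
  qed simp
  then have "(\<integral>\<^sup>+u. \<integral>\<^sup>+v. ennreal (R u v * indicator {0<..} v * indicator {0<..} u) \<partial>lborel \<partial>lborel) =
     (\<integral>\<^sup>+u. \<integral>\<^sup>+t. ennreal (u * R u (u * t) * indicator {0<..} u * indicator {0<..} t) \<partial>lborel \<partial>lborel)"
    by simp
  also have "\<dots> = (\<integral>\<^sup>+t. \<integral>\<^sup>+u. ennreal (u * R u (u * t) * indicator {0<..} u * indicator {0<..} t) \<partial>lborel \<partial>lborel)"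
    by (rule lborel_pair.Fubini'[symmetric]) measurable
  finally show ?thesis .
qed

lemma nn_integral_FTC_pos:
  fixes f F :: "real \<Rightarrow> real"
  assumes deriv: "\<And>x. 0 < x \<Longrightarrow> DERIV F x :> f x"
    and cont: "\<And>x. 0 < x \<Longrightarrow> isCont f x"
    and nonneg: "\<And>x. 0 < x \<Longrightarrow> 0 \<le> f x"
    and lim0: "(F \<longlongrightarrow> A) (at_right 0)"
    and lim_top: "(F \<longlongrightarrow> B) at_top"
  shows "(\<integral>\<^sup>+x. ennreal (f x * indicator {0<..} x) \<partial>lborel) = ennreal (B - A)"
proof -
  have e: "einterval 0 \<infinity> = {0<..}" by (auto simp: einterval_def zero_ereal_def)
  have I: "set_integrable lborel (einterval 0 \<infinity>) f" "(LBINT x=0..\<infinity>. f x) = B - A"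
    using interval_integral_FTC_nonneg[of 0 \<infinity> F f A B] deriv cont nonneg lim0 lim_top
    by (auto simp: zero_ereal_def ereal_tendsto_simps1)
  have int: "integrable lborel (\<lambda>x. f x * indicator {0<..} x)"
    using I(1) unfolding e set_integrable_def by (simp add: mult.commute)
  have "(\<integral>\<^sup>+x. ennreal (f x * indicator {0<..} x) \<partial>lborel) = ennreal (LINT x|lborel. f x * indicator {0<..} x)"
    by (rule nn_integral_eq_integral[OF int]) (auto simp: nonneg split: split_indicator)
  also have "(LINT x|lborel. f x * indicator {0<..} x) = B - A"
    using I(2) by (simp add: interval_lebesgue_integral_def e set_lebesgue_integral_def zero_ereal_def mult.commute)
  finally show ?thesis .
qed

lemma nn_integral_gaussian_difference:
  fixes A B K :: real
  assumes "0 < A" "A \<le> B" "0 \<le> K"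
  shows "(\<integral>\<^sup>+u. ennreal (K * u * (exp (- (A * u\<^sup>2)) - exp (- (B * u\<^sup>2))) * indicator {0<..} u) \<partial>lborel)
     = ennreal (K * (1 / A - 1 / B) / 2)"
proof -
  define F where "F u = K * (exp (- (B * u\<^sup>2)) / B - exp (- (A * u\<^sup>2)) / A) / 2" for u
  have Bp: "B > 0" using assms by simp
  have "(\<integral>\<^sup>+u. ennreal (K * u * (exp (- (A * u\<^sup>2)) - exp (- (B * u\<^sup>2))) * indicator {0<..} u) \<partial>lborel)
       = ennreal (0 - F 0)"
  proof (rule nn_integral_FTC_pos[where F=F])
    fix x :: real assume x: "0 < x"
    show "DERIV F x :> K * x * (exp (- (A * x\<^sup>2)) - exp (- (B * x\<^sup>2)))"
      unfolding F_def using assms Bp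
      by (auto intro!: derivative_eq_intros simp: field_simps power2_eq_square)
    show "isCont (\<lambda>x. K * x * (exp (- (A * x\<^sup>2)) - exp (- (B * x\<^sup>2)))) x"
      by (intro continuous_intros)
    have "exp (- (B * x\<^sup>2)) \<le> exp (- (A * x\<^sup>2))"
      using assms by (simp add: mult_right_mono)
    then show "0 \<le> K * x * (exp (- (A * x\<^sup>2)) - exp (- (B * x\<^sup>2)))"
      using x assms by simp
  next
    have "isCont F 0" unfolding F_def using Bp assms by (intro continuous_intros) auto
    then show "(F \<longlongrightarrow> F 0) (at_right 0)"
      unfolding isCont_def by (rule tendsto_within_subset) auto
    have "((\<lambda>u. exp (- (C * u\<^sup>2))) \<longlongrightarrow> 0) at_top" if "C > 0" for C :: real
      using that by real_asymp
    then have "(F \<longlongrightarrow> K * (0 / B - 0 / A) / 2) at_top"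
      unfolding F_def using Bp assms by (intro tendsto_intros) auto
    then show "(F \<longlongrightarrow> 0) at_top" by simp
  qed
  also have "0 - F 0 = K * (1 / A - 1 / B) / 2"
    by (simp add: F_def field_simps)
  finally show ?thesis .
qed

lemma quadratic_pos:
  fixes a b e s t :: real
  assumes "a > 0" "s > 0" "s\<^sup>2 = a * b - e\<^sup>2"
  shows "a * t\<^sup>2 - 2 * e * t + b > 0"
proof -
  have "a * (a * t\<^sup>2 - 2 * e * t + b) = (a * t - e)\<^sup>2 + s\<^sup>2"
    using assms(3) by (simp add: power2_eq_square algebra_simps)
  moreover have "(a * t - e)\<^sup>2 + s\<^sup>2 > 0" using assms(2) by (simp add: add_nonneg_pos)
  ultimately show ?thesis using assms(1) by (metis zero_less_mult_pos)
qed

text \<open>The arctan antiderivative of s / (a t^2 - 2 e t + b), obtained by completing the square.\<close>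
lemma DERIV_arctan_quadratic:
  fixes a b e s t :: real
  assumes "a > 0" "s > 0" "s\<^sup>2 = a * b - e\<^sup>2"
  shows "DERIV (\<lambda>t. arctan ((a * t - e) / s)) t :> s / (a * t\<^sup>2 - 2 * e * t + b)"
proof -
  have q: "a * t\<^sup>2 - 2 * e * t + b > 0" by (rule quadratic_pos[OF assms])
  have sn: "s \<noteq> 0" using assms(2) by simp
  have eq: "1 + ((a * t - e) / s)\<^sup>2 = a * (a * t\<^sup>2 - 2 * e * t + b) / s\<^sup>2"
  proof -
    have "1 + ((a * t - e) / s)\<^sup>2 = (s\<^sup>2 + (a * t - e)\<^sup>2) / s\<^sup>2"
      using sn by (simp add: field_simps power2_eq_square)
    also have "s\<^sup>2 + (a * t - e)\<^sup>2 = a * (a * t\<^sup>2 - 2 * e * t + b)"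
      unfolding assms(3) by (simp add: algebra_simps power2_eq_square)
    finally show ?thesis .
  qed
  have "DERIV (\<lambda>t. arctan ((a * t - e) / s)) t :> inverse (1 + ((a * t - e) / s)\<^sup>2) * (a / s)"
    using sn by (auto intro!: derivative_eq_intros)
  also have "inverse (1 + ((a * t - e) / s)\<^sup>2) * (a / s) = s / (a * t\<^sup>2 - 2 * e * t + b)"
  proof -
    have cancel: "Q \<noteq> 0 \<Longrightarrow> inverse (a * Q / s\<^sup>2) * (a / s) = s / Q" for Q
      using sn assms(1) by (simp add: field_simps power2_eq_square)
    show ?thesis unfolding eq using q by (intro cancel) simp
  qed
  finally show ?thesis .
qed

lemma nn_integral_arctan_difference:
  fixes a b e :: real
  assumes a: "a > 0" and e: "e \<ge> 0" and d: "a * b - e\<^sup>2 > 0"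
  shows "(\<integral>\<^sup>+t. ennreal (sqrt (a * b - e\<^sup>2) / pi *
            (1 / (a * t\<^sup>2 - 2 * e * t + b) - 1 / (a * t\<^sup>2 + 2 * e * t + b)) * indicator {0<..} t) \<partial>lborel)
     = ennreal (2 / pi * arctan (e / sqrt (a * b - e\<^sup>2)))"
proof -
  define s where "s = sqrt (a * b - e\<^sup>2)"
  have sp: "s > 0" using d by (simp add: s_def)
  have s2: "s\<^sup>2 = a * b - e'\<^sup>2" if "e'\<^sup>2 = e\<^sup>2" for e' using d that by (simp add: s_def)
  define q1 where "q1 t = a * t\<^sup>2 - 2 * e * t + b" for t
  define q2 where "q2 t = a * t\<^sup>2 + 2 * e * t + b" for t
  have q1p: "q1 t > 0" for t unfolding q1_def by (rule quadratic_pos[OF a sp s2]) simp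
  have q2p: "q2 t > 0" for t using quadratic_pos[OF a sp s2, of "- e" t] by (simp add: q2_def)
  define G where "G t = (arctan ((a * t - e) / s) - arctan ((a * t + e) / s)) / pi" for t
  have "(\<integral>\<^sup>+t. ennreal (s / pi * (1 / q1 t - 1 / q2 t) * indicator {0<..} t) \<partial>lborel)
      = ennreal (0 - G 0)"
  proof (rule nn_integral_FTC_pos[where F=G])
    fix x :: real assume x: "0 < x"
    have "DERIV (\<lambda>t. arctan ((a * t - e) / s)) x :> s / q1 x"
      unfolding q1_def by (rule DERIV_arctan_quadratic[OF a sp s2]) simp
    moreover have "DERIV (\<lambda>t. arctan ((a * t + e) / s)) x :> s / q2 x"
      using DERIV_arctan_quadratic[OF a sp s2, of "- e" x] by (simp add: q2_def)
    ultimately have "DERIV G x :> (s / q1 x - s / q2 x) / pi"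
      unfolding G_def by (intro DERIV_cdivide DERIV_diff)
    then show "DERIV G x :> s / pi * (1 / q1 x - 1 / q2 x)"
      by (simp add: field_simps)
    show "isCont (\<lambda>x. s / pi * (1 / q1 x - 1 / q2 x)) x"
      using q1p[of x] q2p[of x] unfolding q1_def q2_def by (intro continuous_intros) auto
    have "q1 x \<le> q2 x" using x e by (simp add: q1_def q2_def)
    then have "1 / q2 x \<le> 1 / q1 x" using q1p[of x] by (intro divide_left_mono) auto
    then show "0 \<le> s / pi * (1 / q1 x - 1 / q2 x)" using sp by simp
  next
    have "isCont G 0" unfolding G_def using sp by (intro continuous_intros) auto
    then show "(G \<longlongrightarrow> G 0) (at_right 0)"
      unfolding isCont_def by (rule tendsto_within_subset) auto
    have lim: "((\<lambda>t. arctan ((a * t + e') / s)) \<longlongrightarrow> pi / 2) at_top" for e'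
      using a sp by real_asymp
    have "((\<lambda>t. arctan ((a * t - e) / s)) \<longlongrightarrow> pi / 2) at_top"
      using lim[of "- e"] by simp
    with lim[of e] have "(G \<longlongrightarrow> (pi / 2 - pi / 2) / pi) at_top"
      unfolding G_def by (intro tendsto_intros) auto
    then show "(G \<longlongrightarrow> 0) at_top" by simp
  qed
  also have "0 - G 0 = 2 / pi * arctan (e / s)"
    by (simp add: G_def arctan_minus)
  finally show ?thesis by (simp add: q1_def q2_def s_def)
qed

text \<open>The Bell-weighted bivariate normal density summed over the four sign quadrants,
  written as a function on the open first quadrant (see the next two lemmas).\<close>
definition folded_bell :: "real \<Rightarrow> real \<Rightarrow> real \<Rightarrow> real \<Rightarrow> real \<Rightarrow> real" where
  "folded_bell a b c u v =
     (exp (- (b * u\<^sup>2 + a * v\<^sup>2) / (2 * (a * b - c\<^sup>2)) + \<bar>c\<bar> * u * v / (a * b - c\<^sup>2))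
    - exp (- (b * u\<^sup>2 + a * v\<^sup>2) / (2 * (a * b - c\<^sup>2)) - \<bar>c\<bar> * u * v / (a * b - c\<^sup>2)))
    / (pi * sqrt (a * b - c\<^sup>2))"

lemma gauss2_split_exp:
  assumes "a * b - c\<^sup>2 > 0"
  shows "gauss2 a b c u v = exp (- (b * u\<^sup>2 + a * v\<^sup>2) / (2 * (a * b - c\<^sup>2)) + c * u * v / (a * b - c\<^sup>2))
            / (2 * pi * sqrt (a * b - c\<^sup>2))"
proof -
  have split: "- (X - 2 * c * u * v + Z) / (2 * D) = - (X + Z) / (2 * D) + c * u * v / D"
    if "D \<noteq> 0" for X Z D :: real
    using that by (simp add: field_simps)
  show ?thesis
    using split[of "a * b - c\<^sup>2" "b * u\<^sup>2" "a * v\<^sup>2"] assms by (simp add: gauss2_def)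
qed

text \<open>On the open quadrant, the four sign-reflected copies of f(u,v) Bell(|u|,|v|) add up
  to S * |D| / S = |D|, and |D| is a difference of two exponentials.\<close>
lemma gauss2_bell_quadrant_sum:
  fixes a b c u v :: real
  defines "h \<equiv> \<lambda>u v. gauss2 a b c u v * Bell_fun (gauss2 a b c) \<bar>u\<bar> \<bar>v\<bar>"
  assumes d: "a * b - c\<^sup>2 > 0" and u: "u > 0" and v: "v > 0"
  shows "h u v + h u (-v) + h (-u) v + h (-u) (-v) = folded_bell a b c u v"
proof -
  define f where "f = gauss2 a b c"
  define \<Delta> where "\<Delta> = a * b - c\<^sup>2"
  define K where "K = 1 / (2 * pi * sqrt \<Delta>)"
  define P where "P = - (b * u\<^sup>2 + a * v\<^sup>2) / (2 * \<Delta>)"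
  define t where "t = c * u * v / \<Delta>"
  have Kp: "K > 0" using d by (simp add: K_def \<Delta>_def)
  have f1: "f u v = K * exp (P + t)" "f (-u) (-v) = K * exp (P + t)"
    "f u (-v) = K * exp (P - t)" "f (-u) v = K * exp (P - t)"
    unfolding f_def using d
    by (simp_all add: gauss2_split_exp K_def P_def t_def \<Delta>_def power2_eq_square)
  have S: "S_fun f u v = 2 * K * (exp (P + t) + exp (P - t))"
    by (simp add: S_fun_def f1 algebra_simps)
  have D: "D_fun f u v = 2 * K * (exp (P + t) - exp (P - t))"
    by (simp add: D_fun_def f1 algebra_simps)
  have Spos: "S_fun f u v > 0" unfolding S using Kp by (intro mult_pos_pos add_pos_pos) auto
  have absD: "\<bar>D_fun f u v\<bar> = 2 * K * (exp (P + \<bar>t\<bar>) - exp (P - \<bar>t\<bar>))"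
    unfolding D using Kp by (cases "t \<ge> 0") (simp_all add: abs_mult)
  have at: "\<bar>t\<bar> = \<bar>c\<bar> * u * v / \<Delta>" using u v d
    by (simp add: t_def abs_mult \<Delta>_def)
  have "h u v + h u (-v) + h (-u) v + h (-u) (-v) = S_fun f u v * Bell_fun f u v"
    unfolding h_def f_def[symmetric] S_fun_def using u v by (simp add: algebra_simps)
  also have "\<dots> = \<bar>D_fun f u v\<bar>" using Spos by (simp add: Bell_fun_def)
  also have "\<dots> = folded_bell a b c u v"
    unfolding absD at folded_bell_def K_def P_def \<Delta>_def by simp
  finally show ?thesis .
qed

text \<open>Along the ray v = u t (t > 0) the folded integrand is a difference of two Gaussians
  in u; integrating them out leaves a rational function of the slope t.\<close>
lemma folded_bell_ray_integral:
  fixes a b c t :: real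
  assumes a: "a > 0" and d: "a * b - c\<^sup>2 > 0" and t: "t > 0"
  shows "(\<integral>\<^sup>+u. ennreal (u * folded_bell a b c u (u * t) * indicator {0<..} u) \<partial>lborel) =
     ennreal (sqrt (a * b - c\<^sup>2) / pi *
       (1 / (a * t\<^sup>2 - 2 * \<bar>c\<bar> * t + b) - 1 / (a * t\<^sup>2 + 2 * \<bar>c\<bar> * t + b)))"
proof -
  define \<Delta> where "\<Delta> = a * b - c\<^sup>2"
  define s where "s = sqrt \<Delta>"
  define q1 where "q1 = a * t\<^sup>2 - 2 * \<bar>c\<bar> * t + b"
  define q2 where "q2 = a * t\<^sup>2 + 2 * \<bar>c\<bar> * t + b"
  have sp: "s > 0" and s2: "s\<^sup>2 = \<Delta>" using d by (simp_all add: s_def \<Delta>_def)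
  have q1p: "q1 > 0"
    unfolding q1_def using quadratic_pos[OF a sp, of b "\<bar>c\<bar>" t] s2 by (simp add: \<Delta>_def)
  have q12: "q1 \<le> q2" using t by (simp add: q1_def q2_def)
  define A where "A = q1 / (2 * \<Delta>)"
  define B where "B = q2 / (2 * \<Delta>)"
  have Ap: "A > 0" using q1p d by (simp add: A_def \<Delta>_def)
  have AB: "A \<le> B" using q12 d by (simp add: A_def B_def \<Delta>_def divide_right_mono)
  have exponent: "- (b * u\<^sup>2 + a * (u * t)\<^sup>2) / (2 * \<Delta>) + e * u * (u * t) / \<Delta>
      = - ((a * t\<^sup>2 - 2 * e * t + b) / (2 * \<Delta>) * u\<^sup>2)" for e u :: real
  proof -
    have "\<Delta> \<noteq> 0" using d by (simp add: \<Delta>_def)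
    then show ?thesis by (simp add: field_simps power2_eq_square)
  qed
  have "u * folded_bell a b c u (u * t) =
        1 / (pi * s) * u * (exp (- (A * u\<^sup>2)) - exp (- (B * u\<^sup>2)))" for u
  proof -
    have "- (b * u\<^sup>2 + a * (u * t)\<^sup>2) / (2 * \<Delta>) + \<bar>c\<bar> * u * (u * t) / \<Delta> = - (A * u\<^sup>2)"
      using exponent[where e="\<bar>c\<bar>" and u=u] by (simp add: A_def q1_def)
    moreover have "- (b * u\<^sup>2 + a * (u * t)\<^sup>2) / (2 * \<Delta>) - \<bar>c\<bar> * u * (u * t) / \<Delta> = - (B * u\<^sup>2)"
      using exponent[where e="- \<bar>c\<bar>" and u=u] by (simp add: B_def q2_def)
    ultimately show ?thesis
      unfolding folded_bell_def \<Delta>_def[symmetric] s_def[symmetric] by simp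
  qed
  then have "(\<integral>\<^sup>+u. ennreal (u * folded_bell a b c u (u * t) * indicator {0<..} u) \<partial>lborel) =
      ennreal (1 / (pi * s) * (1 / A - 1 / B) / 2)"
    using nn_integral_gaussian_difference[OF Ap AB, of "1 / (pi * s)"] sp by simp
  also have "1 / (pi * s) * (1 / A - 1 / B) / 2 = s / pi * (1 / q1 - 1 / q2)"
    using sp q1p q12 by (simp add: A_def B_def s2[symmetric] field_simps power2_eq_square)
  finally show ?thesis by (simp add: s_def \<Delta>_def q1_def q2_def)
qed

lemma nn_integral_bell_gauss2:
  fixes a b c :: real
  defines "h \<equiv> \<lambda>u v. gauss2 a b c u v * Bell_fun (gauss2 a b c) \<bar>u\<bar> \<bar>v\<bar>"
  assumes a: "a > 0" and d: "a * b - c\<^sup>2 > 0"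
  shows "(\<integral>\<^sup>+z. ennreal (h (fst z) (snd z)) \<partial>(lborel::(real \<times> real) measure)) =
      ennreal (2 / pi * arctan (\<bar>c\<bar> / sqrt (a * b - c\<^sup>2)))"
proof -
  have "(\<lambda>z. h (fst z) (snd z)) \<in> borel_measurable (borel \<Otimes>\<^sub>M borel)"
    unfolding h_def Bell_fun_def S_fun_def D_fun_def gauss2_def by measurable
  then have h_meas: "(\<lambda>z. h (fst z) (snd z)) \<in> borel_measurable borel"
    by (simp add: borel_prod)
  have "(\<lambda>z. folded_bell a b c (fst z) (snd z)) \<in> borel_measurable (borel \<Otimes>\<^sub>M borel)"
    unfolding folded_bell_def by measurable
  then have folded_meas: "(\<lambda>z. folded_bell a b c (fst z) (snd z)) \<in> borel_measurable borel"
    by (simp add: borel_prod)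
  have gauss_nonneg: "gauss2 a b c u v \<ge> 0" for u v using d by (simp add: gauss2_def)
  have h_nonneg: "h u v \<ge> 0" for u v
    unfolding h_def Bell_fun_def S_fun_def using gauss_nonneg by auto
  have "(\<integral>\<^sup>+z. ennreal (h (fst z) (snd z)) \<partial>(lborel::(real \<times> real) measure)) =
     (\<integral>\<^sup>+u. \<integral>\<^sup>+v. ennreal ((h u v + h u (-v) + h (-u) v + h (-u) (-v))
        * indicator {0<..} v * indicator {0<..} u) \<partial>lborel \<partial>lborel)"
    by (rule nn_integral_fold_quadrants[OF h_meas h_nonneg])
  also have "\<dots> = (\<integral>\<^sup>+u. \<integral>\<^sup>+v. ennreal (folded_bell a b c u v
        * indicator {0<..} v * indicator {0<..} u) \<partial>lborel \<partial>lborel)"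
    using gauss2_bell_quadrant_sum[OF d] unfolding h_def
    by (intro nn_integral_cong) (simp split: split_indicator)
  also have "\<dots> = (\<integral>\<^sup>+t. \<integral>\<^sup>+u. ennreal (u * folded_bell a b c u (u * t)
        * indicator {0<..} u * indicator {0<..} t) \<partial>lborel \<partial>lborel)"
    by (rule nn_integral_ray_substitution[OF folded_meas])
  also have "\<dots> = (\<integral>\<^sup>+t. ennreal (sqrt (a * b - c\<^sup>2) / pi *
       (1 / (a * t\<^sup>2 - 2 * \<bar>c\<bar> * t + b) - 1 / (a * t\<^sup>2 + 2 * \<bar>c\<bar> * t + b)) * indicator {0<..} t) \<partial>lborel)"
    using folded_bell_ray_integral[OF a d] by (intro nn_integral_cong) (simp split: split_indicator)
  also have "\<dots> = ennreal (2 / pi * arctan (\<bar>c\<bar> / sqrt (a * b - c\<^sup>2)))"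
    using nn_integral_arctan_difference[of a "\<bar>c\<bar>" b] a d by simp
  finally show ?thesis .
qed

lemma bell_integral_gauss2:
  fixes a b c :: real
  assumes a: "a > 0" and d: "a * b - c\<^sup>2 > 0"
  shows "(LINT z|(lborel::(real \<times> real) measure). gauss2 a b c (fst z) (snd z) *
            Bell_fun (gauss2 a b c) \<bar>fst z\<bar> \<bar>snd z\<bar>) = 2 / pi * arctan (\<bar>c\<bar> / sqrt (a * b - c\<^sup>2))"
proof -
  have "(\<lambda>z. gauss2 a b c (fst z) (snd z) * Bell_fun (gauss2 a b c) \<bar>fst z\<bar> \<bar>snd z\<bar>)
      \<in> borel_measurable (borel \<Otimes>\<^sub>M borel)"
    unfolding Bell_fun_def S_fun_def D_fun_def gauss2_def by measurable
  moreover have "gauss2 a b c u v \<ge> 0" for u v using d by (simp add: gauss2_def)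
  moreover have "2 / pi * arctan (\<bar>c\<bar> / sqrt (a * b - c\<^sup>2)) \<ge> 0"
    using d by (intro mult_nonneg_nonneg) (auto intro!: divide_nonneg_nonneg)
  ultimately show ?thesis
    using nn_integral_bell_gauss2[OF a d]
    by (subst integral_eq_nn_integral)
       (auto simp: borel_prod Bell_fun_def S_fun_def intro!: mult_nonneg_nonneg)
qed

lemma sum_lessThan_4: fixes f :: "nat \<Rightarrow> 'a :: comm_monoid_add"
  shows "(\<Sum>i<4. f i) = f 0 + f 1 + f 2 + f 3"
  by (simp add: numeral_eq_Suc add.assoc)

lemma rotated_diagonal_form: "cos t * l * cos t + sin t * l * sin t = (l::real)"
proof -
  have "cos t * l * cos t + sin t * l * sin t = l * (cos t * cos t + sin t * sin t)"
    by (simp only: algebra_simps)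
  then show ?thesis by simp
qed

lemma qform_gamma_std:
  "qform (gamma_std la lb cx cp) (wA \<theta>) (wA \<theta>) = la"
  "qform (gamma_std la lb cx cp) (wB \<phi>) (wB \<phi>) = lb"
  "qform (gamma_std la lb cx cp) (wA \<theta>) (wB \<phi>) = cx * cos \<theta> * cos \<phi> - cp * sin \<theta> * sin \<phi>"
  by (simp_all add: qform_def sum_lessThan_4 gamma_std_def wA_def wB_def rotated_diagonal_form)

lemma rotated_correlation_bound:
  fixes cx cp \<theta> \<phi> :: real
  assumes "cx \<ge> \<bar>cp\<bar>"
  shows "\<bar>cx * cos \<theta> * cos \<phi> - cp * sin \<theta> * sin \<phi>\<bar> \<le> cx"
proof -
  have cx0: "cx \<ge> 0" using assms by linarith
  have "\<bar>cx * cos \<theta> * cos \<phi> - cp * sin \<theta> * sin \<phi>\<bar> \<le> \<bar>cx * cos \<theta> * cos \<phi>\<bar> + \<bar>cp * sin \<theta> * sin \<phi>\<bar>"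
    by (rule abs_triangle_ineq4)
  also have "\<dots> = cx * \<bar>cos \<theta> * cos \<phi>\<bar> + \<bar>cp\<bar> * \<bar>sin \<theta> * sin \<phi>\<bar>"
    using cx0 by (simp add: abs_mult)
  also have "\<dots> \<le> cx * \<bar>cos \<theta> * cos \<phi>\<bar> + cx * \<bar>sin \<theta> * sin \<phi>\<bar>"
    using assms by (intro add_left_mono mult_right_mono) auto
  also have "\<dots> = cx * (\<bar>cos \<theta> * cos \<phi>\<bar> + \<bar>sin \<theta> * sin \<phi>\<bar>)" by (simp add: algebra_simps)
  also have "\<dots> \<le> cx * 1"
  proof (intro mult_left_mono cx0)
    have "2 * \<bar>cos \<theta>\<bar> * \<bar>cos \<phi>\<bar> \<le> (cos \<theta>)\<^sup>2 + (cos \<phi>)\<^sup>2"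
      using sum_squares_bound[of "\<bar>cos \<theta>\<bar>" "\<bar>cos \<phi>\<bar>"] by simp
    moreover have "2 * \<bar>sin \<theta>\<bar> * \<bar>sin \<phi>\<bar> \<le> (sin \<theta>)\<^sup>2 + (sin \<phi>)\<^sup>2"
      using sum_squares_bound[of "\<bar>sin \<theta>\<bar>" "\<bar>sin \<phi>\<bar>"] by simp
    moreover have "(cos \<theta>)\<^sup>2 + (sin \<theta>)\<^sup>2 = 1" "(cos \<phi>)\<^sup>2 + (sin \<phi>)\<^sup>2 = 1" by simp_all
    ultimately show "\<bar>cos \<theta> * cos \<phi>\<bar> + \<bar>sin \<theta> * sin \<phi>\<bar> \<le> 1" unfolding abs_mult by linarith
  qed
  finally show ?thesis by simp
qed

lemma Q_integrand_gamma_std: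
  fixes la lb cx cp :: real
  assumes la: "la > 0" and cx: "cx \<ge> \<bar>cp\<bar>" and d: "la * lb > cx\<^sup>2"
  shows "Q_integrand (gamma_std la lb cx cp) \<theta> \<phi> =
     2 / pi * arctan (\<bar>cx * cos \<theta> * cos \<phi> - cp * sin \<theta> * sin \<phi>\<bar> / sqrt (la * lb - (cx * cos \<theta> * cos \<phi> - cp * sin \<theta> * sin \<phi>)\<^sup>2))"
proof -
  define v where "v = cx * cos \<theta> * cos \<phi> - cp * sin \<theta> * sin \<phi>"
  have vb: "\<bar>v\<bar> \<le> cx" unfolding v_def by (rule rotated_correlation_bound[OF cx])
  have "v\<^sup>2 \<le> cx\<^sup>2" using vb by (metis abs_le_square_iff abs_of_nonneg abs_ge_zero order_trans)
  then have dv: "la * lb - v\<^sup>2 > 0" using d by linarith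
  have "Q_integrand (gamma_std la lb cx cp) \<theta> \<phi> = 2 / pi * arctan (\<bar>v / 2\<bar> / sqrt (la / 2 * (lb / 2) - (v / 2)\<^sup>2))"
    unfolding Q_integrand_def quad_density_def qform_gamma_std v_def[symmetric]
    by (rule bell_integral_gauss2) (use la dv in \<open>auto simp: power2_eq_square field_simps\<close>)
  also have "la / 2 * (lb / 2) - (v / 2)\<^sup>2 = (la * lb - v\<^sup>2) / 4" by (simp add: power2_eq_square field_simps)
  also have "sqrt ((la * lb - v\<^sup>2) / 4) = sqrt (la * lb - v\<^sup>2) / 2" by (simp add: real_sqrt_divide)
  also have "\<bar>v / 2\<bar> / (sqrt (la * lb - v\<^sup>2) / 2) = \<bar>v\<bar> / sqrt (la * lb - v\<^sup>2)" by simp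
  finally show ?thesis unfolding v_def .
qed

lemma arctan_ratio_mono:
  fixes x y M :: real
  assumes "0 \<le> x" "x \<le> y" "y\<^sup>2 < M"
  shows "2 / pi * arctan (x / sqrt (M - x\<^sup>2)) \<le> 2 / pi * arctan (y / sqrt (M - y\<^sup>2))"
proof -
  have "x\<^sup>2 \<le> y\<^sup>2" using assms by (intro power_mono) auto
  then have "x / sqrt (M - x\<^sup>2) \<le> y / sqrt (M - y\<^sup>2)"
    using assms by (intro frac_le) auto
  then show ?thesis by (intro mult_left_mono arctan_monotone') auto
qed

lemma Q_value_gamma_std:
  fixes la lb cx cp :: real
  assumes la: "la > 0" and cx: "cx \<ge> \<bar>cp\<bar>" and d: "la * lb > cx\<^sup>2"
  shows "Q_value (gamma_std la lb cx cp) = 2 / pi * arctan (cx / sqrt (la * lb - cx\<^sup>2))"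
    "Q_integrand (gamma_std la lb cx cp) 0 0 = 2 / pi * arctan (cx / sqrt (la * lb - cx\<^sup>2))"
proof -
  have cx0: "cx \<ge> 0" using cx by linarith
  show I0: "Q_integrand (gamma_std la lb cx cp) 0 0 = 2 / pi * arctan (cx / sqrt (la * lb - cx\<^sup>2))"
    using Q_integrand_gamma_std[OF la cx d, of 0 0] cx0 by simp
  show "Q_value (gamma_std la lb cx cp) = 2 / pi * arctan (cx / sqrt (la * lb - cx\<^sup>2))"
    unfolding Q_value_def
  proof (rule cSup_eq_maximum)
    show "2 / pi * arctan (cx / sqrt (la * lb - cx\<^sup>2)) \<in> (\<lambda>p. Q_integrand (gamma_std la lb cx cp) (fst p) (snd p)) ` UNIV"
      by (rule image_eqI[where x="(0, 0)"]) (use I0 in simp_all)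
    fix y assume "y \<in> (\<lambda>p. Q_integrand (gamma_std la lb cx cp) (fst p) (snd p)) ` UNIV"
    then obtain \<theta> \<phi> where y: "y = Q_integrand (gamma_std la lb cx cp) \<theta> \<phi>" by auto
    show "y \<le> 2 / pi * arctan (cx / sqrt (la * lb - cx\<^sup>2))"
      unfolding y Q_integrand_gamma_std[OF la cx d]
      using arctan_ratio_mono[OF abs_ge_zero rotated_correlation_bound[OF cx] d, of \<theta> \<phi>] by (simp only: power2_abs)
  qed
qed

text \<open>Physicality forces la >= 0 (test the uncertainty relation on the first basis vector);
  with la lb > cx^2 this gives la > 0, needed for nondegeneracy.\<close>
lemma bona_fide_gamma_std_la_nonneg:
  assumes "bona_fide (gamma_std la lb cx cp)"
  shows "la \<ge> 0"
proof -
  define e0 :: "nat \<Rightarrow> complex" where "e0 k = (if k = 0 then 1 else 0)" for k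
  have "0 \<le> Re (\<Sum>i<4. \<Sum>j<4. cnj (e0 i) *
         (complex_of_real (gamma_std la lb cx cp i j) + \<i> * complex_of_real (Omega2 i j)) * e0 j)"
    using assms unfolding bona_fide_def by blast
  then show ?thesis by (simp add: e0_def sum_lessThan_4 gamma_std_def Omega2_def)
qed

text \<open>Two-mode squeezed vacuum: la = lb = cosh 2r and cx = cp = sinh 2r, so that
  la lb - cx^2 = 1 and the general formula reduces to 2/pi arctan (sinh 2r).\<close>
lemma Q_value_two_mode_squeezed_vacuum:
  fixes r :: real
  assumes "r \<ge> 0"
  shows "Q_value (gamma_std (cosh (2 * r)) (cosh (2 * r)) (sinh (2 * r)) (sinh (2 * r)))
       = 2 / pi * arctan (sinh (2 * r))"
proof -
  have det: "cosh (2 * r) * cosh (2 * r) - (sinh (2 * r))\<^sup>2 = 1"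
    using hyperbolic_pythagoras[of "2 * r"] by (simp add: power2_eq_square)
  have "sinh (2 * r) \<ge> 0" using assms by simp
  then show ?thesis
    using Q_value_gamma_std(1)[of "cosh (2 * r)" "sinh (2 * r)" "sinh (2 * r)" "cosh (2 * r)"] det
    by simp
qed

theorem mainTheorem4:
  fixes la lb cx cp :: real
  assumes "bona_fide (gamma_std la lb cx cp)"
    and "cx \<ge> \<bar>cp\<bar>"
    and "la * lb > cx\<^sup>2"
  shows "Q_value (gamma_std la lb cx cp) = 2 / pi * arctan (cx / sqrt (la * lb - cx\<^sup>2))
       \<and> Q_integrand (gamma_std la lb cx cp) 0 0 = Q_value (gamma_std la lb cx cp)
       \<and> (\<forall>r::real. r \<ge> 0 \<longrightarrow>
            Q_value (gamma_std (cosh (2 * r)) (cosh (2 * r)) (sinh (2 * r)) (sinh (2 * r)))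
              = 2 / pi * arctan (sinh (2 * r)))"
proof -
  have "la \<noteq> 0" using assms(3) by auto
  then have la: "la > 0" using bona_fide_gamma_std_la_nonneg[OF assms(1)] by simp
  show ?thesis
    using Q_value_gamma_std[OF la assms(2,3)] Q_value_two_mode_squeezed_vacuum by simp
qed

end
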